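(* Let $\Pi$ be an affine PTS with affine invariant $I$, and suppose that the process started at $(\ell_{\mathrm{init}},\mathbf v_{\mathrm{init}})$ terminates almost surely (reaches $\{\ell_t,\ell_f\}$ with probability $1$), where $\ell_{\mathrm{init}}\notin\{\ell_t,\ell_f\}$. Suppose that for every location $\ell\notin\{\ell_t,\ell_f\}$ we are given $\mathbf a_\ell\in\mathbb R^V$, $b_\ell\in\mathbb R$, and set $\mathbf a_{\ell_f}=\mathbf 0$, $b_{\ell_f}=0$, such that: (i) there is $M\in\mathbb R$ with $\mathbf a_\ell\cdot\mathbf v+b_\ell\le M$ for every non-terminal $\ell$ and every $\mathbf v\in I(\ell)$; and (ii) for every transition $\tau=\langle\ell^{\mathrm{src}},\varphi,F_1,\dots,F_k\rangle$ with forks $F_j=\langle\ell^{\mathrm{dst}}_j,p_j,\mathrm{upd}_j\rangle$, $\mathrm{upd}_j(\mathbf v,\mathbf u)=\mathbf Q_j\mathbf v+\mathbf R_j\mathbf u+\mathbf e_j$, letting $J_\tau=\{j:\ell^{\mathrm{dst}}_j\ne\ell_t\}$ and $Q_\tau=\sum_{j\in J_\tau}p_j$, we have $Q_\tau>0$ and, for every $\mathbf v\in I(\ell^{\mathrm{src}})$ with $\mathbf v\models\varphi$, $$Q_\tau^{-1}\sum_{j\in J_\tau}p_j\Big(\mathbf a_{\ell^{\mathrm{dst}}_j}\cdot(\mathbf Q_j\mathbf v+\mathbf R_j\boldsymbol\mu+\mathbf e_j)+b_{\ell^{\mathrm{dst}}_j}-\mathbf a_{\ell^{\mathrm{src}}}\cdot\mathbf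 v-b_{\ell^{\mathrm{src}}}\Big)\ge-\ln Q_\tau,$$ where $\boldsymbol\mu=\mathbb E[\mathbf r]$. Then the function $\theta$ with $\theta(\ell_t,\cdot)=0$, $\theta(\ell_f,\cdot)=1$, $\theta(\ell,\mathbf v)=\exp(\mathbf a_\ell\cdot\mathbf v+b_\ell)$ otherwise is a bounded post fixed point on reachable states, and $\mathrm{vpf}(\ell_{\mathrm{init}},\mathbf v_{\mathrm{init}})\ge\exp(\mathbf a_{\ell_{\mathrm{init}}}\cdot\mathbf v_{\mathrm{init}}+b_{\ell_{\mathrm{init}}})$.
   Context: A probabilistic transition system (PTS) $\Pi$ consists of: a finite set $V$ of program variables (valuations $\mathbf v\in\mathbb R^V$); a finite set $R$ of sampling variables, each $r\in R$ with a probability distribution $\mathcal D(r)$ on $\mathbb R$ with finite mean; $\mathbf r$ denotes the random vector with independent coordinates $\mathbf r[r]\sim\mathcal D(r)$, and $\mathcal U\subseteq\mathbb R^R$ a set with $\Pr[\mathbf r\in\mathcal U]=1$; a finite set $L$ of locations containing an initial location $\ell_{\mathrm{init}}$ and two distinct terminal locations $\ell_t$ (normal termination) and $\ell_f$ (assertion violation); an initial valuation $\mathbf v_{\mathrm{init}}$; and a finite set of transitions $\tau=\langle\ell^{\mathrm{src}},\varphi,F_1,\dots,F_k\rangle$, $\ell^{\mathrm{src}}$ non-terminal, guard $\varphi$, forks $F_j=\langle\ell^{\mathrm{dst}}_j,p_j,\mathrm{upd}_j\rangle$ with $p_j>0$, $\sum_jp_j=1$. For each non-terminal $\ell$ and $\mathbf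 v$ exactly one transition has $\ell^{\mathrm{src}}=\ell$ and $\mathbf v\models\varphi$ (the enabled one). The process: from the current state $(\ell,\mathbf v)$ with $\ell$ non-terminal, take the enabled transition, choose fork $j$ with probability $p_j$, draw a fresh independent copy $\mathbf u$ of $\mathbf r$, move to $(\ell^{\mathrm{dst}}_j,\mathrm{upd}_j(\mathbf v,\mathbf u))$; terminal locations are absorbing. $\mathrm{vpf}(\ell,\mathbf v)$ is the probability of ever reaching $\ell_f$ from $(\ell,\mathbf v)$. $\Pi$ is affine if every guard is a conjunction of affine inequalities in the program variables and every update has the form $\mathrm{upd}(\mathbf v,\mathbf u)=\mathbf Q\mathbf v+\mathbf R\mathbf u+\mathbf e$ with constant matrices $\mathbf Q,\mathbf R$ and constant vector $\mathbf e$. $\mathrm{Reach}$ is the smallest set of states containing $(\ell_{\mathrm{init}},\mathbf v_{\mathrm{init}})$ and closed under taking successors $(\ell^{\mathrm{dst}}_j,\mathrm{upd}_j(\mathbf v,\mathbf u))$ with $\mathbf u\in\mathcal U$ along enabled transitions. An invariant $I$ maps each location $\ell$ to $I(\ell)\subseteq\mathbb R^V$ with $\mathbf v\in I(\ell)$ whenever $(\ell,\mathbf v)\in\mathrm{Reach}$; it is affine if each $I(\ell)$ is a conjunction of affine inequalities. $\mathsf{ptf}$ maps $f$ (with $f(\ell_t,\cdot)=0$, $f(\ell_f,\cdot)=1$) to $\mathsf{ptf}(f)(\ell_f,\mathbf v)=1$, $\mathsf{ptf}(f)(\ell_t,\mathbf v)=0$, and for non-terminal $\ell$, $\mathsf{ptf}(f)(\ell,\mathbf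 v)=\sum_jp_j\mathbb E_{\mathbf r}[f(\ell^{\mathrm{dst}}_j,\mathrm{upd}_j(\mathbf v,\mathbf r))]$ for the enabled transition; a post fixed point on reachable states is $f$ with $f(\sigma)\le\mathsf{ptf}(f)(\sigma)$ for all $\sigma\in\mathrm{Reach}$. *)

theory Defs
  imports "HOL-Probability.Probability"
begin

text \<open>Program variables are indexed by a
finite type 'v (valuations are functions 'v => real), sampling variables by a
finite type 'r, locations by a finite type 'l.  Updates of an affine PTS are given
directly by their matrices Q, R and vector e.\<close>

datatype ('l, 'v, 'r) fork =
  Fork (dst: 'l) (fprob: real) (Qm: "'v \<Rightarrow> 'v \<Rightarrow> real") (Rm: "'v \<Rightarrow> 'r \<Rightarrow> real") (ev: "'v \<Rightarrow> real")

datatype ('l, 'v, 'r) transition =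
  Trans (src: 'l) (guard: "('v \<Rightarrow> real) set") (forks: "('l, 'v, 'r) fork list")

record ('l, 'v, 'r) pts =
  loc_t :: 'l
  loc_f :: 'l
  loc_init :: 'l
  val_init :: "'v \<Rightarrow> real"
  trans :: "('l, 'v, 'r) transition set"
  dist :: "'r \<Rightarrow> real measure"
  supp :: "('r \<Rightarrow> real) set"

definition dotp :: "('v::finite \<Rightarrow> real) \<Rightarrow> ('v \<Rightarrow> real) \<Rightarrow> real" where
  "dotp a v = (\<Sum>i\<in>UNIV. a i * v i)"

definition upd :: "('l, 'v::finite, 'r::finite) fork \<Rightarrow> ('v \<Rightarrow> real) \<Rightarrow> ('r \<Rightarrow> real) \<Rightarrow> ('v \<Rightarrow> real)" where
  "upd F v u = (\<lambda>i. (\<Sum>j\<in>UNIV. Qm F i j * v j) + (\<Sum>k\<in>UNIV. Rm F i k * u k) + ev F i)"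

definition affine_conj :: "('v::finite \<Rightarrow> real) set \<Rightarrow> bool" where
  "affine_conj S \<longleftrightarrow> (\<exists>cs :: (('v \<Rightarrow> real) \<times> real \<times> bool) list.
      S = {v. \<forall>(c, d, strict) \<in> set cs. if strict then dotp c v < d else dotp c v \<le> d})"

definition sample_measure :: "('l, 'v, 'r::finite) pts \<Rightarrow> ('r \<Rightarrow> real) measure" where
  "sample_measure P = PiM UNIV (dist P)"

definition dist_mean :: "('l, 'v, 'r) pts \<Rightarrow> ('r \<Rightarrow> real)" where
  "dist_mean P = (\<lambda>k. \<integral>x. x \<partial>(dist P k))"

definition is_pts :: "('l::finite, 'v::finite, 'r::finite) pts \<Rightarrow> bool" where
  "is_pts P \<longleftrightarrow>
     loc_t P \<noteq> loc_f P \<and> finite (trans P) \<and>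
     (\<forall>k. prob_space (dist P k) \<and> sets (dist P k) = sets borel \<and> integrable (dist P k) (\<lambda>x. x)) \<and>
     supp P \<in> sets (sample_measure P) \<and> emeasure (sample_measure P) (supp P) = 1 \<and>
     (\<forall>\<tau>\<in>trans P. src \<tau> \<notin> {loc_t P, loc_f P} \<and>
        (\<forall>F\<in>set (forks \<tau>). fprob F > 0) \<and> sum_list (map fprob (forks \<tau>)) = 1) \<and>
     (\<forall>l v. l \<notin> {loc_t P, loc_f P} \<longrightarrow> (\<exists>!\<tau>. \<tau> \<in> trans P \<and> src \<tau> = l \<and> v \<in> guard \<tau>))"

definition affine_pts :: "('l::finite, 'v::finite, 'r::finite) pts \<Rightarrow> bool" where
  "affine_pts P \<longleftrightarrow> is_pts P \<and> (\<forall>\<tau>\<in>trans P. affine_conj (guard \<tau>))"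

definition enabled :: "('l, 'v, 'r) pts \<Rightarrow> 'l \<Rightarrow> ('v \<Rightarrow> real) \<Rightarrow> ('l, 'v, 'r) transition" where
  "enabled P l v = (THE \<tau>. \<tau> \<in> trans P \<and> src \<tau> = l \<and> v \<in> guard \<tau>)"

definition state_space :: "('l \<times> ('v \<Rightarrow> real)) measure" where
  "state_space = count_space UNIV \<Otimes>\<^sub>M PiM UNIV (\<lambda>_. borel)"

definition fork_pmf :: "('l, 'v, 'r) fork list \<Rightarrow> nat pmf" where
  "fork_pmf Fs = pmf_of_list (map (\<lambda>j. (j, fprob (Fs ! j))) [0..<length Fs])"

definition kernel :: "('l::finite, 'v::finite, 'r::finite) pts \<Rightarrow> ('l \<times> ('v \<Rightarrow> real)) \<Rightarrow> ('l \<times> ('v \<Rightarrow> real)) measure" where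
  "kernel P \<sigma> = (case \<sigma> of (l, v) \<Rightarrow>
     if l = loc_t P \<or> l = loc_f P then return state_space (l, v)
     else (let Fs = forks (enabled P l v) in
       bind (measure_pmf (fork_pmf Fs))
         (\<lambda>j. distr (sample_measure P) state_space (\<lambda>u. (dst (Fs ! j), upd (Fs ! j) v u)))))"

fun kpow :: "('s \<Rightarrow> 's measure) \<Rightarrow> nat \<Rightarrow> 's \<Rightarrow> 's set \<Rightarrow> ennreal" where
  "kpow K 0 s A = indicator A s"
| "kpow K (Suc n) s A = (\<integral>\<^sup>+ s'. kpow K n s' A \<partial>(K s))"

text \<open>Probability of ever reaching l_f (since l_f is absorbing, this is the supremum
over n of the probability of being in l_f after n steps).\<close>
definition vpf :: "('l::finite, 'v::finite, 'r::finite) pts \<Rightarrow> ('l \<times> ('v \<Rightarrow> real)) \<Rightarrow> ennreal" where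
  "vpf P \<sigma> = (SUP n. kpow (kernel P) n \<sigma> ({loc_f P} \<times> UNIV))"

definition terminates_as :: "('l::finite, 'v::finite, 'r::finite) pts \<Rightarrow> ('l \<times> ('v \<Rightarrow> real)) \<Rightarrow> bool" where
  "terminates_as P \<sigma> \<longleftrightarrow> (SUP n. kpow (kernel P) n \<sigma> ({loc_t P, loc_f P} \<times> UNIV)) = 1"

inductive_set reach :: "('l::finite, 'v::finite, 'r::finite) pts \<Rightarrow> ('l \<times> ('v \<Rightarrow> real)) set"
  for P where
  init: "(loc_init P, val_init P) \<in> reach P"
| step: "(l, v) \<in> reach P \<Longrightarrow> l \<notin> {loc_t P, loc_f P} \<Longrightarrow> F \<in> set (forks (enabled P l v)) \<Longrightarrow>
         u \<in> supp P \<Longrightarrow> (dst F, upd F v u) \<in> reach P"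

definition is_invariant :: "('l::finite, 'v::finite, 'r::finite) pts \<Rightarrow> ('l \<Rightarrow> ('v \<Rightarrow> real) set) \<Rightarrow> bool" where
  "is_invariant P I \<longleftrightarrow> (\<forall>(l, v) \<in> reach P. v \<in> I l)"

definition affine_invariant :: "('l::finite, 'v::finite, 'r::finite) pts \<Rightarrow> ('l \<Rightarrow> ('v \<Rightarrow> real) set) \<Rightarrow> bool" where
  "affine_invariant P I \<longleftrightarrow> is_invariant P I \<and> (\<forall>l. affine_conj (I l))"

definition ptf :: "('l::finite, 'v::finite, 'r::finite) pts \<Rightarrow> ('l \<times> ('v \<Rightarrow> real) \<Rightarrow> real) \<Rightarrow> ('l \<times> ('v \<Rightarrow> real) \<Rightarrow> real)" where
  "ptf P f \<sigma> = (case \<sigma> of (l, v) \<Rightarrow>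
     if l = loc_f P then 1 else if l = loc_t P then 0
     else (\<Sum>F\<leftarrow>forks (enabled P l v). fprob F * (\<integral>u. f (dst F, upd F v u) \<partial>(sample_measure P))))"

definition post_fixed_point_on_reach :: "('l::finite, 'v::finite, 'r::finite) pts \<Rightarrow> ('l \<times> ('v \<Rightarrow> real) \<Rightarrow> real) \<Rightarrow> bool" where
  "post_fixed_point_on_reach P f \<longleftrightarrow>
     (\<forall>v. f (loc_t P, v) = 0) \<and> (\<forall>v. f (loc_f P, v) = 1) \<and> (\<forall>\<sigma>\<in>reach P. f \<sigma> \<le> ptf P f \<sigma>)"

definition theta :: "('l, 'v::finite, 'r) pts \<Rightarrow> ('l \<Rightarrow> 'v \<Rightarrow> real) \<Rightarrow> ('l \<Rightarrow> real) \<Rightarrow> ('l \<times> ('v \<Rightarrow> real) \<Rightarrow> real)" where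
  "theta P a b \<sigma> = (case \<sigma> of (l, v) \<Rightarrow>
     if l = loc_t P then 0 else if l = loc_f P then 1 else exp (dotp (a l) v + b l))"

end

theory Submission
  imports Defs
begin

text \<open>
  The function theta is a post fixed point by two applications of Jensen's inequality for exp.
  At a non-terminal state (l, v) with enabled transition tau, forks into the normal-termination
  location contribute nothing, and fork j in J_tau contributes p_j times the expected value of
  theta at the successor, which is at least p_j exp y_j, where y_j is the template exponent
  evaluated at the mean mu of the sampled values (updates are affine, and a, b vanish at the
  violation location, so the exponential formula holds there too).  Jensen for the weights p_j/Q_tau
  then gives a lower bound Q_tau exp (sum of p_j y_j / Q_tau), which is at least exp (a_l . v + b_l)
  precisely by condition (ii).

  For the lower bound on vpf, any measurable nonnegative post fixed point f bounded by C on
  reachable states satisfies f(s) <= Pr[in l_f after n steps] + C Pr[not terminated after n steps],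
  by induction on n.  Almost-sure termination makes the last term arbitrarily small; condition (i)
  and the invariant give the bound C = max 1 (exp M) for theta.
\<close>

section \<open>Measurability and affine updates\<close>

abbreviation borel_pi :: "('i::finite \<Rightarrow> real) measure" where
  "borel_pi \<equiv> PiM UNIV (\<lambda>_. borel)"

lemma space_borel_pi [simp]: "space borel_pi = UNIV"
  by (simp add: space_PiM)

lemma sets_state_space [measurable_cong]:
  "sets state_space = sets (count_space UNIV \<Otimes>\<^sub>M borel_pi)"
  by (simp add: state_space_def)

lemma space_state_space [simp]: "space state_space = UNIV"
  by (simp add: state_space_def space_pair_measure space_PiM)

lemma measurable_state_space:
  fixes f :: "'l::countable \<times> ('v::finite \<Rightarrow> real) \<Rightarrow> 'b"
  assumes "\<And>l. (\<lambda>v. f (l, v)) \<in> borel_pi \<rightarrow>\<^sub>M N"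
  shows "f \<in> state_space \<rightarrow>\<^sub>M N"
  unfolding measurable_cong_sets[OF sets_state_space refl]
  by (rule measurable_pair_measure_countable1) (simp_all add: assms)

lemma measurable_dotp [measurable]: "(\<lambda>v. dotp c v) \<in> borel_measurable borel_pi"
  unfolding dotp_def by measurable

lemma measurable_upd [measurable]:
  "(\<lambda>p. upd F (fst p) (snd p)) \<in> borel_pi \<Otimes>\<^sub>M borel_pi \<rightarrow>\<^sub>M borel_pi"
  unfolding upd_def by (rule measurable_PiM_single') measurable

lemma measurable_upd_sample [measurable]: "upd F v \<in> borel_pi \<rightarrow>\<^sub>M borel_pi"
  unfolding upd_def by (rule measurable_PiM_single') measurable

lemma sets_affine_conj:
  fixes S :: "('v::finite \<Rightarrow> real) set"
  assumes "affine_conj S"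
  shows "S \<in> sets borel_pi"
proof -
  obtain cs :: "(('v \<Rightarrow> real) \<times> real \<times> bool) list"
    where S: "S = {v \<in> space borel_pi. \<forall>x \<in> set cs.
      if snd (snd x) then dotp (fst x) v < fst (snd x) else dotp (fst x) v \<le> fst (snd x)}"
    using assms unfolding affine_conj_def by (auto simp: case_prod_beta)
  show ?thesis unfolding S by measurable
qed

lemma dotp_upd_affine:
  "dotp c (upd F v u) = dotp c (upd F v (\<lambda>_. 0)) + dotp (\<lambda>k. \<Sum>i\<in>UNIV. c i * Rm F i k) u"
proof -
  have "(\<Sum>k\<in>UNIV. (\<Sum>i\<in>UNIV. c i * Rm F i k) * u k)
      = (\<Sum>i\<in>UNIV. c i * (\<Sum>k\<in>UNIV. Rm F i k * u k))"
    by (simp add: sum_distrib_left sum_distrib_right mult.assoc) (rule sum.swap)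
  then show ?thesis
    by (simp add: dotp_def upd_def distrib_left sum.distrib)
qed

section \<open>The one-step kernel\<close>

lemma fork_pmf_wf:
  assumes "\<forall>F\<in>set Fs. 0 \<le> fprob F" "sum_list (map fprob Fs) = 1"
  shows "pmf_of_list_wf (map (\<lambda>j. (j, fprob (Fs ! j))) [0..<length Fs])"
proof -
  have "map snd (map (\<lambda>j. (j, fprob (Fs ! j))) [0..<length Fs]) = map fprob Fs"
    by (rule nth_equalityI) auto
  then show ?thesis
    using assms unfolding pmf_of_list_wf_def by (auto simp: in_set_conv_nth)
qed

lemma pmf_fork_pmf:
  assumes "pmf_of_list_wf (map (\<lambda>j. (j, fprob (Fs ! j))) [0..<length Fs])" "j < length Fs"
  shows "pmf (fork_pmf Fs) j = fprob (Fs ! j)"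
proof -
  have "filter (\<lambda>i. i = j) [0..<length Fs] = [j]"
    using assms(2) by (induction Fs rule: rev_induct) auto
  then show ?thesis
    unfolding fork_pmf_def pmf_pmf_of_list[OF assms(1)] by (simp add: filter_map comp_def)
qed

lemma set_pmf_fork_pmf:
  assumes "pmf_of_list_wf (map (\<lambda>j. (j, fprob (Fs ! j))) [0..<length Fs])"
  shows "set_pmf (fork_pmf Fs) \<subseteq> {..<length Fs}"
  using set_pmf_of_list[OF assms] unfolding fork_pmf_def by auto

lemma ptf_nonterminal:
  assumes "l \<notin> {loc_t P, loc_f P}" "forks (enabled P l v) = Fs"
  shows "ptf P f (l, v) =
    (\<Sum>j<length Fs. fprob (Fs ! j) * (\<integral>u. f (dst (Fs ! j), upd (Fs ! j) v u) \<partial>sample_measure P))"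
  using assms unfolding ptf_def by (auto simp: sum_list_sum_nth atLeast0LessThan)

locale well_formed_pts =
  fixes P :: "('l::finite, 'v::finite, 'r::finite) pts"
  assumes pts: "is_pts P"
begin

lemma loc_t_neq_loc_f: "loc_t P \<noteq> loc_f P"
  using pts unfolding is_pts_def by simp

lemma prob_space_sample_measure: "prob_space (sample_measure P)"
  using pts unfolding is_pts_def sample_measure_def by (auto intro!: prob_space_PiM)

lemma sets_sample_measure [measurable_cong]: "sets (sample_measure P) = sets borel_pi"
  using pts unfolding is_pts_def sample_measure_def by (intro sets_PiM_cong) auto

lemma AE_supp: "AE u in sample_measure P. u \<in> supp P"
proof -
  interpret prob_space "sample_measure P" by (rule prob_space_sample_measure)
  show ?thesis
    using pts unfolding is_pts_def by (subst AE_in_set_eq_1) (auto simp: emeasure_eq_measure)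
qed

lemma enabled:
  assumes "l \<notin> {loc_t P, loc_f P}"
  shows "enabled P l v \<in> trans P" "src (enabled P l v) = l" "v \<in> guard (enabled P l v)"
proof -
  have "\<exists>!\<tau>. \<tau> \<in> trans P \<and> src \<tau> = l \<and> v \<in> guard \<tau>"
    using pts assms unfolding is_pts_def by blast
  from theI'[OF this]
  show "enabled P l v \<in> trans P" "src (enabled P l v) = l" "v \<in> guard (enabled P l v)"
    unfolding enabled_def by auto
qed

lemma enabled_unique:
  assumes "l \<notin> {loc_t P, loc_f P}" "\<tau> \<in> trans P" "src \<tau> = l" "v \<in> guard \<tau>"
  shows "enabled P l v = \<tau>"
proof -
  have "\<exists>!\<tau>. \<tau> \<in> trans P \<and> src \<tau> = l \<and> v \<in> guard \<tau>"
    using pts assms(1) unfolding is_pts_def by blast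
  then show ?thesis
    unfolding enabled_def using assms(2-4) by (intro the1_equality) auto
qed

lemma fprob_pos: "\<tau> \<in> trans P \<Longrightarrow> j < length (forks \<tau>) \<Longrightarrow> 0 < fprob (forks \<tau> ! j)"
  using pts nth_mem unfolding is_pts_def by blast

lemma fork_pmf_wf_trans:
  "\<tau> \<in> trans P \<Longrightarrow> pmf_of_list_wf (map (\<lambda>j. (j, fprob (forks \<tau> ! j))) [0..<length (forks \<tau>)])"
  using pts unfolding is_pts_def by (intro fork_pmf_wf) (auto intro: less_imp_le)

lemma measurable_fork_distr:
  "(\<lambda>j. distr (sample_measure P) state_space (\<lambda>u. (dst (Fs ! j), upd (Fs ! j) v u)))
     \<in> measure_pmf p \<rightarrow>\<^sub>M subprob_algebra state_space"
proof -
  interpret prob_space "sample_measure P" by (rule prob_space_sample_measure)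
  have "(\<lambda>u. (dst (Fs ! j), upd (Fs ! j) v u)) \<in> sample_measure P \<rightarrow>\<^sub>M state_space" for j
    by measurable
  then show ?thesis
    by (auto simp: measurable_cong_sets[OF sets_measure_pmf_count_space refl] space_subprob_algebra
        intro!: prob_space_imp_subprob_space prob_space_distr)
qed

lemma sets_kernel [measurable_cong]: "sets (kernel P \<sigma>) = sets state_space"
  unfolding kernel_def using measurable_fork_distr
  by (auto simp: Let_def split: prod.split intro!: sets_bind)

lemma subprob_space_kernel: "subprob_space (kernel P \<sigma>)"
  unfolding kernel_def
  using subprob_space_bind[OF subprob_space_measure_pmf measurable_fork_distr]
  by (auto simp: Let_def split: prod.split intro!: subprob_space_return)

lemma nn_integral_kernel_terminal:
  assumes "l \<in> {loc_t P, loc_f P}" "g \<in> borel_measurable state_space"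
  shows "(\<integral>\<^sup>+\<sigma>. g \<sigma> \<partial>kernel P (l, v)) = g (l, v)"
  using assms unfolding kernel_def by (auto intro!: nn_integral_return)

lemma nn_integral_kernel:
  assumes l: "l \<notin> {loc_t P, loc_f P}" and Fs: "forks (enabled P l v) = Fs"
    and g [measurable]: "g \<in> borel_measurable state_space"
  shows "(\<integral>\<^sup>+\<sigma>. g \<sigma> \<partial>kernel P (l, v)) = (\<Sum>j<length Fs.
      ennreal (fprob (Fs ! j)) * (\<integral>\<^sup>+u. g (dst (Fs ! j), upd (Fs ! j) v u) \<partial>sample_measure P))"
proof -
  have \<tau>: "enabled P l v \<in> trans P"
    using enabled(1)[OF l] .
  have "(\<integral>\<^sup>+\<sigma>. g \<sigma> \<partial>kernel P (l, v)) =
      (\<integral>\<^sup>+j. (\<integral>\<^sup>+u. g (dst (Fs ! j), upd (Fs ! j) v u) \<partial>sample_measure P) \<partial>fork_pmf Fs)"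
    using l unfolding kernel_def
    by (simp add: Fs nn_integral_bind[OF g measurable_fork_distr] nn_integral_distr)
  also have "\<dots> = (\<Sum>j<length Fs.
      (\<integral>\<^sup>+u. g (dst (Fs ! j), upd (Fs ! j) v u) \<partial>sample_measure P) * pmf (fork_pmf Fs) j)"
    using set_pmf_fork_pmf[OF fork_pmf_wf_trans[OF \<tau>]] Fs
    by (intro nn_integral_measure_pmf_support) auto
  also have "\<dots> = (\<Sum>j<length Fs.
      ennreal (fprob (Fs ! j)) * (\<integral>\<^sup>+u. g (dst (Fs ! j), upd (Fs ! j) v u) \<partial>sample_measure P))"
    using pmf_fork_pmf[OF fork_pmf_wf_trans[OF \<tau>]] Fs by (intro sum.cong) (auto simp: mult.commute)
  finally show ?thesis .
qed

lemma has_bochner_integral_component: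
  "has_bochner_integral (sample_measure P) (\<lambda>u. u k) (dist_mean P k)"
proof -
  have dist: "distr (sample_measure P) (dist P k) (\<lambda>u. u k) = dist P k"
    using pts unfolding is_pts_def sample_measure_def by (intro distr_PiM_component) auto
  have component: "(\<lambda>u. u k) \<in> sample_measure P \<rightarrow>\<^sub>M dist P k"
    unfolding sample_measure_def by (rule measurable_component_singleton) simp
  have "sets (dist P k) = sets borel" and "integrable (dist P k) (\<lambda>x. x)"
    using pts unfolding is_pts_def by simp_all
  moreover from this(1) have id: "(\<lambda>x. x) \<in> borel_measurable (dist P k)"
    by (rule measurable_ident_sets)
  ultimately show ?thesis
    using integrable_distr_eq[OF component id] integral_distr[OF component id]
    unfolding has_bochner_integral_iff dist dist_mean_def by simp
qed

lemma has_bochner_integral_dotp_upd: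
  "has_bochner_integral (sample_measure P)
    (\<lambda>u. dotp c (upd F v u)) (dotp c (upd F v (dist_mean P)))"
proof -
  interpret prob_space "sample_measure P" by (rule prob_space_sample_measure)
  define w where "w k = (\<Sum>i\<in>UNIV. c i * Rm F i k)" for k
  have "has_bochner_integral (sample_measure P) (\<lambda>u. dotp c (upd F v (\<lambda>_. 0)) + dotp w u)
      (dotp c (upd F v (\<lambda>_. 0)) + dotp w (dist_mean P))"
    unfolding dotp_def[of w]
    by (intro has_bochner_integral_add has_bochner_integral_sum has_bochner_integral_mult_right
        has_bochner_integral_component) (use prob_space in \<open>simp add: has_bochner_integral_iff\<close>)
  then show ?thesis
    unfolding w_def dotp_upd_affine[of c F v, symmetric] .
qed

lemma AE_successor_reach:
  assumes "(l, v) \<in> reach P" "l \<notin> {loc_t P, loc_f P}" "F \<in> set (forks (enabled P l v))"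
  shows "AE u in sample_measure P. (dst F, upd F v u) \<in> reach P"
  using AE_supp by eventually_elim (use assms in \<open>auto intro: reach.step\<close>)

lemma integrable_successor:
  fixes f :: "'l \<times> ('v \<Rightarrow> real) \<Rightarrow> real"
  assumes [measurable]: "f \<in> borel_measurable state_space" and bounded: "\<forall>\<sigma>\<in>reach P. \<bar>f \<sigma>\<bar> \<le> C"
    and "(l, v) \<in> reach P" "l \<notin> {loc_t P, loc_f P}" "F \<in> set (forks (enabled P l v))"
  shows "integrable (sample_measure P) (\<lambda>u. f (dst F, upd F v u))"
proof -
  interpret prob_space "sample_measure P" by (rule prob_space_sample_measure)
  have "AE u in sample_measure P. norm (f (dst F, upd F v u)) \<le> C"
    using AE_successor_reach[OF assms(3-5)] by eventually_elim (use bounded in auto)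
  then show ?thesis by (intro integrable_const_bound) measurable
qed

lemma ptf_le_nn_integral_kernel:
  fixes f :: "'l \<times> ('v \<Rightarrow> real) \<Rightarrow> real"
  assumes f [measurable]: "f \<in> borel_measurable state_space" and f_nonneg: "\<And>\<sigma>. 0 \<le> f \<sigma>"
    and f_bounded: "\<forall>\<sigma>\<in>reach P. \<bar>f \<sigma>\<bar> \<le> C"
    and h [measurable]: "h \<in> borel_measurable state_space"
    and f_le_h: "\<And>\<sigma>. \<sigma> \<in> reach P \<Longrightarrow> ennreal (f \<sigma>) \<le> h \<sigma>"
    and reach: "(l, v) \<in> reach P" and l: "l \<notin> {loc_t P, loc_f P}"
  shows "ennreal (ptf P f (l, v)) \<le> (\<integral>\<^sup>+\<sigma>. h \<sigma> \<partial>kernel P (l, v))"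
proof -
  define Fs where "Fs = forks (enabled P l v)"
  define E where "E j = (\<integral>u. f (dst (Fs ! j), upd (Fs ! j) v u) \<partial>sample_measure P)" for j
  have E_nonneg: "0 \<le> E j" for j
    unfolding E_def using f_nonneg by (simp add: integral_nonneg)
  have "ptf P f (l, v) = (\<Sum>j<length Fs. fprob (Fs ! j) * E j)"
    unfolding E_def by (rule ptf_nonterminal[OF l Fs_def[symmetric]])
  also have "ennreal \<dots> = (\<Sum>j<length Fs. ennreal (fprob (Fs ! j)) * ennreal (E j))"
    using fprob_pos[OF enabled(1)[OF l]] E_nonneg unfolding Fs_def
    by (subst sum_ennreal[symmetric]) (auto simp: ennreal_mult less_imp_le intro!: sum.cong)
  also have "\<dots> \<le> (\<Sum>j<length Fs. ennreal (fprob (Fs ! j)) *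
      (\<integral>\<^sup>+u. h (dst (Fs ! j), upd (Fs ! j) v u) \<partial>sample_measure P))"
  proof (intro sum_mono mult_left_mono)
    fix j assume "j \<in> {..<length Fs}"
    then have fork: "Fs ! j \<in> set (forks (enabled P l v))"
      unfolding Fs_def by simp
    have "ennreal (E j) = (\<integral>\<^sup>+u. ennreal (f (dst (Fs ! j), upd (Fs ! j) v u)) \<partial>sample_measure P)"
      unfolding E_def using integrable_successor[OF f f_bounded reach l fork] f_nonneg
      by (intro nn_integral_eq_integral[symmetric]) auto
    also have "\<dots> \<le> (\<integral>\<^sup>+u. h (dst (Fs ! j), upd (Fs ! j) v u) \<partial>sample_measure P)"
      using AE_successor_reach[OF reach l fork]
      by (intro nn_integral_mono_AE) (auto elim!: eventually_mono f_le_h)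
    finally show "ennreal (E j) \<le> (\<integral>\<^sup>+u. h (dst (Fs ! j), upd (Fs ! j) v u) \<partial>sample_measure P)" .
  qed simp
  also have "\<dots> = (\<integral>\<^sup>+\<sigma>. h \<sigma> \<partial>kernel P (l, v))"
    by (rule nn_integral_kernel[OF l Fs_def[symmetric] h, symmetric])
  finally show ?thesis .
qed

end

section \<open>Bounded post fixed points are lower bounds on the violation probability\<close>

lemma ennreal_less_of_add_le_1:
  fixes x y :: ennreal
  assumes "x + y \<le> 1" "ennreal (1 - e) < y"
  shows "x < ennreal e"
proof (cases x rule: ennreal_cases)
  case (real a)
  show ?thesis
  proof (cases y rule: ennreal_cases)
    case (real b)
    have "a + b \<le> 1"
      using assms(1) real \<open>x = ennreal a\<close> \<open>0 \<le> a\<close> by (simp flip: ennreal_plus)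
    moreover have "1 - e < b"
      using assms(2) real by (cases "0 \<le> 1 - e") (auto simp: ennreal_less_iff)
    ultimately show ?thesis
      using \<open>x = ennreal a\<close> \<open>0 \<le> a\<close> by (simp add: ennreal_less_iff)
  qed (use assms in \<open>auto simp: top_unique\<close>)
qed (use assms in \<open>auto simp: top_unique\<close>)

locale measurable_pts = well_formed_pts P for P :: "('l::finite, 'v::finite, 'r::finite) pts" +
  assumes measurable_guards: "\<And>\<tau>. \<tau> \<in> trans P \<Longrightarrow> guard \<tau> \<in> sets borel_pi"
begin

abbreviation violation_states :: "('l \<times> ('v \<Rightarrow> real)) set" where
  "violation_states \<equiv> {loc_f P} \<times> UNIV"

abbreviation terminated_states :: "('l \<times> ('v \<Rightarrow> real)) set" where
  "terminated_states \<equiv> {loc_t P, loc_f P} \<times> UNIV"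

abbreviation running_states :: "('l \<times> ('v \<Rightarrow> real)) set" where
  "running_states \<equiv> (- {loc_t P, loc_f P}) \<times> UNIV"

text \<open>The enabled transition is chosen by THE; this guard-indexed form makes the kernel
  visibly measurable in the valuation.\<close>

lemma enabled_eq_sum_guards:
  fixes X :: "('l, 'v, 'r) transition \<Rightarrow> 'a::comm_semiring_1"
  assumes l: "l \<notin> {loc_t P, loc_f P}"
  shows "X (enabled P l v) = (\<Sum>\<tau>\<in>{\<tau>\<in>trans P. src \<tau> = l}. indicator (guard \<tau>) v * X \<tau>)"
proof -
  have "(\<Sum>\<tau>\<in>{\<tau>\<in>trans P. src \<tau> = l}. indicator (guard \<tau>) v * X \<tau>) =
      (\<Sum>\<tau>\<in>{\<tau>\<in>trans P. src \<tau> = l}. if \<tau> = enabled P l v then X \<tau> else 0)"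
    using enabled[OF l] enabled_unique[OF l] by (intro sum.cong) (auto simp: indicator_def)
  also have "\<dots> = X (enabled P l v)"
    using pts enabled[OF l] unfolding is_pts_def by simp
  finally show ?thesis by simp
qed

lemma sets_times_UNIV [measurable]: "A \<times> UNIV \<in> sets (state_space :: ('l \<times> ('v \<Rightarrow> real)) measure)"
  using sets.top[of "borel_pi :: ('v \<Rightarrow> real) measure"] unfolding sets_state_space
  by (intro pair_measureI) auto

lemma measurable_nn_integral_kernel [measurable]:
  assumes [measurable]: "g \<in> borel_measurable state_space"
  shows "(\<lambda>\<sigma>. \<integral>\<^sup>+\<sigma>'. g \<sigma>' \<partial>kernel P \<sigma>) \<in> borel_measurable state_space"
proof (rule measurable_state_space)
  fix l
  show "(\<lambda>v. \<integral>\<^sup>+\<sigma>'. g \<sigma>' \<partial>kernel P (l, v)) \<in> borel_measurable borel_pi"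
  proof (cases "l \<in> {loc_t P, loc_f P}")
    case True
    then show ?thesis by (simp add: nn_integral_kernel_terminal)
  next
    case False
    interpret prob_space "sample_measure P" by (rule prob_space_sample_measure)
    define X where "X \<tau> v = (\<Sum>j<length (forks \<tau>). ennreal (fprob (forks \<tau> ! j)) *
        (\<integral>\<^sup>+u. g (dst (forks \<tau> ! j), upd (forks \<tau> ! j) v u) \<partial>sample_measure P))" for \<tau> v
    have "(\<integral>\<^sup>+\<sigma>'. g \<sigma>' \<partial>kernel P (l, v)) =
        (\<Sum>\<tau>\<in>{\<tau>\<in>trans P. src \<tau> = l}. indicator (guard \<tau>) v * X \<tau> v)" for v
      using nn_integral_kernel[OF False refl] enabled_eq_sum_guards[OF False, of "\<lambda>\<tau>. X \<tau> v"]
      unfolding X_def by simp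
    moreover have "X \<tau> \<in> borel_measurable borel_pi" for \<tau>
      unfolding X_def by measurable
    ultimately show ?thesis
      using measurable_guards by simp
  qed
qed

lemma measurable_kpow [measurable]:
  "A \<in> sets state_space \<Longrightarrow> (\<lambda>\<sigma>. kpow (kernel P) n \<sigma> A) \<in> borel_measurable state_space"
  by (induction n) simp_all

lemma kpow_disjoint_le_1:
  assumes "A \<in> sets state_space" "B \<in> sets state_space" "A \<inter> B = {}"
  shows "kpow (kernel P) n \<sigma> A + kpow (kernel P) n \<sigma> B \<le> 1"
proof (induction n arbitrary: \<sigma>)
  case 0
  then show ?case using assms(3) by (auto simp: indicator_def)
next
  case (Suc n)
  interpret subprob_space "kernel P \<sigma>" by (rule subprob_space_kernel)
  have "kpow (kernel P) (Suc n) \<sigma> A + kpow (kernel P) (Suc n) \<sigma> B =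
      (\<integral>\<^sup>+\<sigma>'. kpow (kernel P) n \<sigma>' A + kpow (kernel P) n \<sigma>' B \<partial>kernel P \<sigma>)"
    using assms by (simp add: nn_integral_add)
  also have "\<dots> \<le> 1"
    using Suc.IH by (intro nn_integral_le_const) auto
  finally show ?case .
qed

lemma post_fixed_point_le_kpow:
  fixes f :: "'l \<times> ('v \<Rightarrow> real) \<Rightarrow> real"
  assumes f [measurable]: "f \<in> borel_measurable state_space" and f_nonneg: "\<And>\<sigma>. 0 \<le> f \<sigma>"
    and f_bounded: "\<forall>\<sigma>\<in>reach P. \<bar>f \<sigma>\<bar> \<le> C" and pfp: "post_fixed_point_on_reach P f"
    and "\<sigma> \<in> reach P"
  shows "ennreal (f \<sigma>)
    \<le> kpow (kernel P) n \<sigma> violation_states + ennreal C * kpow (kernel P) n \<sigma> running_states"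
  using \<open>\<sigma> \<in> reach P\<close>
proof (induction n arbitrary: \<sigma>)
  case 0
  then show ?case
    using f_bounded pfp loc_t_neq_loc_f
    by (cases \<sigma>) (auto simp: post_fixed_point_on_reach_def indicator_def)
next
  case (Suc n)
  define h where "h \<sigma>' = kpow (kernel P) n \<sigma>' violation_states
    + ennreal C * kpow (kernel P) n \<sigma>' running_states" for \<sigma>'
  have [measurable]: "h \<in> borel_measurable state_space"
    unfolding h_def by measurable
  obtain l v where \<sigma>: "\<sigma> = (l, v)"
    by force
  have "ennreal (f \<sigma>) \<le> (\<integral>\<^sup>+\<sigma>'. h \<sigma>' \<partial>kernel P \<sigma>)"
  proof (cases "l \<in> {loc_t P, loc_f P}")
    case True
    have "(\<integral>\<^sup>+\<sigma>'. h \<sigma>' \<partial>kernel P \<sigma>) = h \<sigma>"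
      unfolding \<sigma> using True by (rule nn_integral_kernel_terminal) measurable
    then show ?thesis
      using Suc unfolding h_def by simp
  next
    case False
    have "f \<sigma> \<le> ptf P f \<sigma>"
      using pfp Suc.prems unfolding post_fixed_point_on_reach_def by blast
    also have "ennreal (ptf P f \<sigma>) \<le> (\<integral>\<^sup>+\<sigma>'. h \<sigma>' \<partial>kernel P \<sigma>)"
      using Suc False unfolding \<sigma>
      by (intro ptf_le_nn_integral_kernel[OF f f_nonneg f_bounded]) (auto simp: h_def)
    finally show ?thesis
      by (simp add: ennreal_leI)
  qed
  also have "\<dots> = kpow (kernel P) (Suc n) \<sigma> violation_states
      + ennreal C * kpow (kernel P) (Suc n) \<sigma> running_states"
    unfolding h_def by (simp add: nn_integral_add nn_integral_cmult)
  finally show ?case .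
qed

lemma terminates_as_running_vanishes:
  assumes "terminates_as P \<sigma>" "0 < e"
  shows "\<exists>n. kpow (kernel P) n \<sigma> running_states < ennreal e"
proof -
  have "ennreal (1 - e) < (SUP n. kpow (kernel P) n \<sigma> terminated_states)"
    using assms unfolding terminates_as_def by (simp add: ennreal_lessI)
  then obtain n where n: "ennreal (1 - e) < kpow (kernel P) n \<sigma> terminated_states"
    by (auto simp: less_SUP_iff)
  have "kpow (kernel P) n \<sigma> running_states + kpow (kernel P) n \<sigma> terminated_states \<le> 1"
    by (rule kpow_disjoint_le_1) auto
  then show ?thesis
    using n ennreal_less_of_add_le_1 by blast
qed

lemma post_fixed_point_le_vpf:
  fixes f :: "'l \<times> ('v \<Rightarrow> real) \<Rightarrow> real"
  assumes f: "f \<in> borel_measurable state_space" and f_nonneg: "\<And>\<sigma>. 0 \<le> f \<sigma>"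
    and f_bounded: "\<forall>\<sigma>\<in>reach P. \<bar>f \<sigma>\<bar> \<le> C" and pfp: "post_fixed_point_on_reach P f"
    and reach: "\<sigma> \<in> reach P" and terminates: "terminates_as P \<sigma>"
  shows "ennreal (f \<sigma>) \<le> vpf P \<sigma>"
proof (rule ennreal_le_epsilon)
  fix e :: real
  assume "0 < e"
  define C' where "C' = max C 1"
  have "0 < C'" "\<forall>\<sigma>\<in>reach P. \<bar>f \<sigma>\<bar> \<le> C'"
    using f_bounded unfolding C'_def by force+
  obtain n where n: "kpow (kernel P) n \<sigma> running_states < ennreal (e / C')"
    using terminates_as_running_vanishes[OF terminates divide_pos_pos[OF \<open>0 < e\<close> \<open>0 < C'\<close>]]
    by blast
  have "ennreal (f \<sigma>) \<le> kpow (kernel P) n \<sigma> violation_states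
      + ennreal C' * kpow (kernel P) n \<sigma> running_states"
    by (rule post_fixed_point_le_kpow[OF f f_nonneg \<open>\<forall>\<sigma>\<in>reach P. \<bar>f \<sigma>\<bar> \<le> C'\<close> pfp reach])
  also have "\<dots> \<le> vpf P \<sigma> + ennreal e"
  proof (rule add_mono)
    show "kpow (kernel P) n \<sigma> violation_states \<le> vpf P \<sigma>"
      unfolding vpf_def by (rule SUP_upper) simp
    have "ennreal C' * kpow (kernel P) n \<sigma> running_states \<le> ennreal C' * ennreal (e / C')"
      using n by (intro mult_left_mono) auto
    also have "\<dots> = ennreal e"
      using \<open>0 < e\<close> \<open>0 < C'\<close> by (simp flip: ennreal_mult)
    finally show "ennreal C' * kpow (kernel P) n \<sigma> running_states \<le> ennreal e" .
  qed
  finally show "ennreal (f \<sigma>) \<le> vpf P \<sigma> + ennreal e" .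
qed

end

section \<open>The exponential template\<close>

lemma exp_le_weighted_sum_exp:
  fixes p y :: "'a \<Rightarrow> real"
  assumes "finite J" "\<And>j. j \<in> J \<Longrightarrow> 0 \<le> p j" and Q: "0 < (\<Sum>j\<in>J. p j)"
    and drift: "- ln (\<Sum>j\<in>J. p j) \<le> 1 / (\<Sum>j\<in>J. p j) * (\<Sum>j\<in>J. p j * (y j - x))"
  shows "exp x \<le> (\<Sum>j\<in>J. p j * exp (y j))"
proof -
  define Q where "Q = (\<Sum>j\<in>J. p j)"
  have "Q > 0" "J \<noteq> {}"
    using Q unfolding Q_def by auto
  have "(\<Sum>j\<in>J. p j * (y j - x)) = (\<Sum>j\<in>J. p j * y j) - Q * x"
    unfolding Q_def by (simp add: algebra_simps sum_subtractf sum_distrib_left sum_distrib_right)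
  then have "x - ln Q \<le> (\<Sum>j\<in>J. p j / Q * y j)"
    using drift \<open>Q > 0\<close> unfolding Q_def[symmetric]
    by (simp add: field_simps sum_divide_distrib[symmetric])
  have "exp x / Q = exp (x - ln Q)"
    using \<open>Q > 0\<close> by (simp add: exp_diff)
  also have "\<dots> \<le> exp (\<Sum>j\<in>J. p j / Q * y j)"
    using \<open>x - ln Q \<le> (\<Sum>j\<in>J. p j / Q * y j)\<close> by simp
  also have "\<dots> \<le> (\<Sum>j\<in>J. p j / Q * exp (y j))"
    using convex_on_sum[OF \<open>finite J\<close> \<open>J \<noteq> {}\<close> exp_convex, of "\<lambda>j. p j / Q" y] assms(2) \<open>Q > 0\<close>
    unfolding Q_def by (simp add: sum_divide_distrib[symmetric])
  finally show ?thesis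
    using \<open>Q > 0\<close> by (simp add: field_simps sum_divide_distrib[symmetric])
qed

definition exp_template_condition ::
  "('l, 'v::finite, 'r::finite) pts \<Rightarrow> ('l \<Rightarrow> ('v \<Rightarrow> real) set) \<Rightarrow> ('l \<Rightarrow> 'v \<Rightarrow> real) \<Rightarrow> ('l \<Rightarrow> real)
    \<Rightarrow> ('l, 'v, 'r) transition \<Rightarrow> bool"
where
  "exp_template_condition P I a b \<tau> \<longleftrightarrow>
    (let Fs = forks \<tau>;
         J = {j. j < length Fs \<and> dst (Fs ! j) \<noteq> loc_t P};
         Q = (\<Sum>j\<in>J. fprob (Fs ! j))
     in Q > 0 \<and>
        (\<forall>v \<in> I (src \<tau>). v \<in> guard \<tau> \<longrightarrow>
           (1 / Q) * (\<Sum>j\<in>J. fprob (Fs ! j) *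
              (dotp (a (dst (Fs ! j))) (upd (Fs ! j) v (dist_mean P)) + b (dst (Fs ! j))
               - dotp (a (src \<tau>)) v - b (src \<tau>))) \<ge> - ln Q))"

locale exp_template = well_formed_pts P for P :: "('l::finite, 'v::finite, 'r::finite) pts" +
  fixes a :: "'l \<Rightarrow> 'v \<Rightarrow> real" and b :: "'l \<Rightarrow> real"
  assumes a_loc_f: "a (loc_f P) = (\<lambda>_. 0)" and b_loc_f: "b (loc_f P) = 0"
begin

lemma theta_eq_exp: "l \<noteq> loc_t P \<Longrightarrow> theta P a b (l, v) = exp (dotp (a l) v + b l)"
  using a_loc_f b_loc_f loc_t_neq_loc_f by (simp add: theta_def dotp_def)

lemma theta_nonneg: "0 \<le> theta P a b \<sigma>"
  by (cases \<sigma>) (simp add: theta_def)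

lemma measurable_theta [measurable]: "theta P a b \<in> borel_measurable state_space"
  by (rule measurable_state_space) (simp add: theta_def)

end

locale bounded_exp_template = exp_template P a b
  for P :: "('l::finite, 'v::finite, 'r::finite) pts"
    and a :: "'l \<Rightarrow> 'v \<Rightarrow> real" and b :: "'l \<Rightarrow> real" +
  fixes I :: "'l \<Rightarrow> ('v \<Rightarrow> real) set" and M :: real
  assumes invariant: "is_invariant P I"
    and template_bounded: "\<forall>l. l \<notin> {loc_t P, loc_f P} \<longrightarrow> (\<forall>v\<in>I l. dotp (a l) v + b l \<le> M)"
begin

lemma theta_bounded: "\<forall>\<sigma>\<in>reach P. \<bar>theta P a b \<sigma>\<bar> \<le> max 1 (exp M)"
proof
  fix \<sigma> assume "\<sigma> \<in> reach P"
  obtain l v where \<sigma>: "\<sigma> = (l, v)"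
    by force
  have "v \<in> I l"
    using invariant \<open>\<sigma> \<in> reach P\<close> unfolding is_invariant_def \<sigma> by blast
  then show "\<bar>theta P a b \<sigma>\<bar> \<le> max 1 (exp M)"
    using template_bounded unfolding \<sigma> theta_def by (auto simp: max.coboundedI2)
qed

lemma exp_mean_le_integral_theta:
  assumes reach: "(l, v) \<in> reach P" and l: "l \<notin> {loc_t P, loc_f P}"
    and fork: "F \<in> set (forks (enabled P l v))" and "dst F \<noteq> loc_t P"
  shows "exp (dotp (a (dst F)) (upd F v (dist_mean P)) + b (dst F))
    \<le> (\<integral>u. theta P a b (dst F, upd F v u) \<partial>sample_measure P)"
proof -
  interpret prob_space "sample_measure P" by (rule prob_space_sample_measure)
  define G where "G u = dotp (a (dst F)) (upd F v u) + b (dst F)" for u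
  have theta_G: "theta P a b (dst F, upd F v u) = exp (G u)" for u
    unfolding G_def using theta_eq_exp \<open>dst F \<noteq> loc_t P\<close> by simp
  have "has_bochner_integral (sample_measure P) G
      (dotp (a (dst F)) (upd F v (dist_mean P)) + b (dst F))"
    unfolding G_def
    by (intro has_bochner_integral_add has_bochner_integral_dotp_upd)
      (use prob_space in \<open>simp add: has_bochner_integral_iff\<close>)
  moreover have "integrable (sample_measure P) (\<lambda>u. exp (G u))"
    using integrable_successor[OF measurable_theta theta_bounded reach l fork] unfolding theta_G .
  ultimately show ?thesis
    using jensens_inequality[of G UNIV 0 0 exp] exp_convex
    unfolding theta_G by (simp add: has_bochner_integral_iff)
qed

lemma theta_le_ptf:
  assumes cond: "exp_template_condition P I a b (enabled P l v)"
    and reach: "(l, v) \<in> reach P" and l: "l \<notin> {loc_t P, loc_f P}"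
  shows "theta P a b (l, v) \<le> ptf P (theta P a b) (l, v)"
proof -
  define Fs where "Fs = forks (enabled P l v)"
  define J where "J = {j. j < length Fs \<and> dst (Fs ! j) \<noteq> loc_t P}"
  define y where
    "y j = dotp (a (dst (Fs ! j))) (upd (Fs ! j) v (dist_mean P)) + b (dst (Fs ! j))" for j
  define E where "E j = (\<integral>u. theta P a b (dst (Fs ! j), upd (Fs ! j) v u) \<partial>sample_measure P)" for j
  have p_nonneg: "0 \<le> fprob (Fs ! j)" if "j < length Fs" for j
    using fprob_pos[OF enabled(1)[OF l]] that unfolding Fs_def by (simp add: less_imp_le)
  have fork: "Fs ! j \<in> set (forks (enabled P l v))" if "j < length Fs" for j
    using that unfolding Fs_def by simp
  have "v \<in> I l"
    using invariant reach unfolding is_invariant_def by blast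
  then have "0 < (\<Sum>j\<in>J. fprob (Fs ! j))"
    and drift: "- ln (\<Sum>j\<in>J. fprob (Fs ! j))
      \<le> 1 / (\<Sum>j\<in>J. fprob (Fs ! j)) * (\<Sum>j\<in>J. fprob (Fs ! j) * (y j - (dotp (a l) v + b l)))"
    using cond enabled[OF l]
    unfolding exp_template_condition_def Let_def Fs_def[symmetric] J_def[symmetric]
    by (auto simp: y_def algebra_simps)
  have "theta P a b (l, v) = exp (dotp (a l) v + b l)"
    using l theta_eq_exp by simp
  also have "\<dots> \<le> (\<Sum>j\<in>J. fprob (Fs ! j) * exp (y j))"
    using p_nonneg \<open>0 < (\<Sum>j\<in>J. fprob (Fs ! j))\<close> drift
    by (intro exp_le_weighted_sum_exp) (auto simp: J_def)
  also have "\<dots> \<le> (\<Sum>j\<in>J. fprob (Fs ! j) * E j)"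
    using p_nonneg fork unfolding J_def y_def E_def
    by (intro sum_mono mult_left_mono exp_mean_le_integral_theta[OF reach l]) auto
  also have "\<dots> \<le> (\<Sum>j<length Fs. fprob (Fs ! j) * E j)"
    using p_nonneg unfolding J_def E_def
    by (intro sum_mono2)
      (auto intro!: mult_nonneg_nonneg Bochner_Integration.integral_nonneg theta_nonneg)
  also have "\<dots> = ptf P (theta P a b) (l, v)"
    unfolding E_def by (rule ptf_nonterminal[OF l Fs_def[symmetric], symmetric])
  finally show ?thesis .
qed

lemma theta_post_fixed_point:
  assumes "\<forall>\<tau>\<in>trans P. exp_template_condition P I a b \<tau>"
  shows "post_fixed_point_on_reach P (theta P a b)"
  unfolding post_fixed_point_on_reach_def
proof (intro conjI allI ballI)
  fix \<sigma> assume "\<sigma> \<in> reach P"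
  obtain l v where \<sigma>: "\<sigma> = (l, v)"
    by force
  show "theta P a b \<sigma> \<le> ptf P (theta P a b) \<sigma>"
  proof (cases "l \<in> {loc_t P, loc_f P}")
    case True
    then show ?thesis
      unfolding \<sigma> theta_def ptf_def using loc_t_neq_loc_f by auto
  next
    case False
    then show ?thesis
      using assms enabled(1)[OF False] \<open>\<sigma> \<in> reach P\<close> unfolding \<sigma> by (intro theta_le_ptf) auto
  qed
qed (use loc_t_neq_loc_f in \<open>simp_all add: theta_def\<close>)

end

theorem mainTheorem12:
  fixes P :: "('l::finite, 'v::finite, 'r::finite) pts"
    and I :: "'l \<Rightarrow> ('v \<Rightarrow> real) set"
    and a :: "'l \<Rightarrow> 'v \<Rightarrow> real" and b :: "'l \<Rightarrow> real"
  assumes "affine_pts P"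
    and "affine_invariant P I"
    and "loc_init P \<notin> {loc_t P, loc_f P}"
    and "terminates_as P (loc_init P, val_init P)"
    and "a (loc_f P) = (\<lambda>_. 0)" and "b (loc_f P) = 0"
    and "\<exists>M. \<forall>l. l \<notin> {loc_t P, loc_f P} \<longrightarrow> (\<forall>v\<in>I l. dotp (a l) v + b l \<le> M)"
    and "\<forall>\<tau>\<in>trans P.
          (let Fs = forks \<tau>;
               J = {j. j < length Fs \<and> dst (Fs ! j) \<noteq> loc_t P};
               Q = (\<Sum>j\<in>J. fprob (Fs ! j))
           in Q > 0 \<and>
              (\<forall>v \<in> I (src \<tau>). v \<in> guard \<tau> \<longrightarrow>
                 (1 / Q) * (\<Sum>j\<in>J. fprob (Fs ! j) *
                    (dotp (a (dst (Fs ! j))) (upd (Fs ! j) v (dist_mean P)) + b (dst (Fs ! j))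
                     - dotp (a (src \<tau>)) v - b (src \<tau>))) \<ge> - ln Q))"
  shows "(\<exists>B. \<forall>\<sigma>\<in>reach P. \<bar>theta P a b \<sigma>\<bar> \<le> B)
    \<and> post_fixed_point_on_reach P (theta P a b)
    \<and> ennreal (exp (dotp (a (loc_init P)) (val_init P) + b (loc_init P)))
        \<le> vpf P (loc_init P, val_init P)"
proof -
  interpret measurable_pts P
    using assms(1) unfolding affine_pts_def by unfold_locales (auto intro: sets_affine_conj)
  obtain M where "\<forall>l. l \<notin> {loc_t P, loc_f P} \<longrightarrow> (\<forall>v\<in>I l. dotp (a l) v + b l \<le> M)"
    using assms(7) by blast
  then interpret bounded_exp_template P a b I M
    using assms(2,5,6) unfolding affine_invariant_def by unfold_locales auto
  have pfp: "post_fixed_point_on_reach P (theta P a b)"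
    by (rule theta_post_fixed_point) (use assms(8) in \<open>simp add: exp_template_condition_def\<close>)
  have "ennreal (theta P a b (loc_init P, val_init P)) \<le> vpf P (loc_init P, val_init P)"
    using measurable_theta theta_nonneg theta_bounded pfp reach.init assms(4)
    by (rule post_fixed_point_le_vpf)
  then show ?thesis
    using theta_bounded pfp theta_eq_exp assms(3) by auto
qed

end
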